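(* Let $p=(p_k)_{k\in\mathbb{N}}$ be a probability mass function with $p_k=0$ for all odd $k$, let $c\in(0,1)$, and let $(\tilde G^{(p)}_n)_{n\ge n_p}$ be the connected unions of circulant regular graphs described below, with $\phi_n$ a uniformly chosen vertex. Then (a) $\lim_{n\to\infty}\mathbb{P}(d_{\phi_n}=k)=p_k$ for every $k$; in particular, if $p$ is a power law, then $d_{\phi_n}$ converges in distribution to a power law with the same tail index; (b) $R^{(\tilde G^{(p)}_n)}_{\phi_n}\to1$ in probability as $n\to\infty$.
   Context: For even $k\ge2$ and $N>k$, $G_{k,N}$ has vertex set $\mathbb{Z}/N\mathbb{Z}$ with $i$ adjacent to $i\pm1,\dots,i\pm k/2$. Let $N_{k,n}=\lfloor np_k\rfloor$, let $(M_n)$ diverge to infinity slowly enough that $N_{k,n}\ge k+1$ for all even $k\in[M_n]$ with $p_k>0$, and $n_p=\min\{n:M_n\ge2\}$. For $n\ge n_p$, $G^{(p)}_n$ is the disjoint union of $G_{k,N_{k,n}}$ over even $k\in[M_n]$ with $p_k>0$, and $\tilde G^{(p)}_n$ is obtained by adding, for each pair of components with consecutive degrees, one edge between a vertex of each, making the graph connected. PageRank with damping factor $c$: $p_{ij}=a_{ij}/d_i$ and $\boldsymbol{R}$ uniquely solves $\boldsymbol{R}=c\boldsymbol{R}\boldsymbol{P}+(1-c)\boldsymbol{1}$. A random variable has a power-law distribution with exponent $\tau>1$ (tail index $\tau-1$) if $\mathbb{P}(X>x)=\mathcal{L}(x)x^{-(\tau-1)}$ with $\mathcal{L}$ slowly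 varying at infinity. *)

theory Defs
  imports "HOL-Analysis.Analysis"
begin

definition circ_adj :: "nat \<Rightarrow> nat \<Rightarrow> nat \<Rightarrow> nat \<Rightarrow> bool" where
  "circ_adj k N i j \<longleftrightarrow> i < N \<and> j < N \<and> i \<noteq> j \<and>
     (let d = (int i - int j) mod int N in
        (1 \<le> d \<and> d \<le> int (k div 2)) \<or> (int N - int (k div 2) \<le> d \<and> d \<le> int N - 1))"

definition Nkn :: "(nat \<Rightarrow> real) \<Rightarrow> nat \<Rightarrow> nat \<Rightarrow> nat" where
  "Nkn p k n = nat \<lfloor>real n * p k\<rfloor>"

definition Dset :: "(nat \<Rightarrow> real) \<Rightarrow> (nat \<Rightarrow> nat) \<Rightarrow> nat \<Rightarrow> nat set" where
  "Dset p M n = {k. even k \<and> 1 \<le> k \<and> k \<le> M n \<and> p k > 0}"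

text \<open>Vertex set of G^(p)_n: pairs (k,i), i a vertex of the component G_{k,N_{k,n}}.\<close>
definition Vset :: "(nat \<Rightarrow> real) \<Rightarrow> (nat \<Rightarrow> nat) \<Rightarrow> nat \<Rightarrow> (nat \<times> nat) set" where
  "Vset p M n = {(k, i). k \<in> Dset p M n \<and> i < Nkn p k n}"

definition G_adj :: "(nat \<Rightarrow> real) \<Rightarrow> (nat \<Rightarrow> nat) \<Rightarrow> nat \<Rightarrow> nat \<times> nat \<Rightarrow> nat \<times> nat \<Rightarrow> bool" where
  "G_adj p M n u v \<longleftrightarrow> u \<in> Vset p M n \<and> v \<in> Vset p M n \<and>
     fst u = fst v \<and> circ_adj (fst u) (Nkn p (fst u) n) (snd u) (snd v)"

definition consec :: "nat set \<Rightarrow> nat \<Rightarrow> nat \<Rightarrow> bool" where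
  "consec D k l \<longleftrightarrow> k \<in> D \<and> l \<in> D \<and> k < l \<and> (\<forall>m\<in>D. \<not> (k < m \<and> m < l))"

definition bridge :: "(nat \<Rightarrow> real) \<Rightarrow> (nat \<Rightarrow> nat) \<Rightarrow> (nat \<Rightarrow> nat \<Rightarrow> nat) \<Rightarrow> (nat \<Rightarrow> nat \<Rightarrow> nat)
    \<Rightarrow> nat \<Rightarrow> nat \<times> nat \<Rightarrow> nat \<times> nat \<Rightarrow> bool" where
  "bridge p M a b n u v \<longleftrightarrow> consec (Dset p M n) (fst u) (fst v) \<and>
     snd u = a n (fst u) \<and> snd v = b n (fst u)"

definition tG_adj :: "(nat \<Rightarrow> real) \<Rightarrow> (nat \<Rightarrow> nat) \<Rightarrow> (nat \<Rightarrow> nat \<Rightarrow> nat) \<Rightarrow> (nat \<Rightarrow> nat \<Rightarrow> nat)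
    \<Rightarrow> nat \<Rightarrow> nat \<times> nat \<Rightarrow> nat \<times> nat \<Rightarrow> bool" where
  "tG_adj p M a b n u v \<longleftrightarrow> G_adj p M n u v \<or> bridge p M a b n u v \<or> bridge p M a b n v u"

definition degree :: "'a set \<Rightarrow> ('a \<Rightarrow> 'a \<Rightarrow> bool) \<Rightarrow> 'a \<Rightarrow> nat" where
  "degree V adj v = card {u \<in> V. adj v u}"

definition is_pagerank :: "'a set \<Rightarrow> ('a \<Rightarrow> 'a \<Rightarrow> bool) \<Rightarrow> real \<Rightarrow> ('a \<Rightarrow> real) \<Rightarrow> bool" where
  "is_pagerank V adj c R \<longleftrightarrow> (\<forall>v. v \<notin> V \<longrightarrow> R v = 0) \<and>
     (\<forall>j\<in>V. R j = c * (\<Sum>i\<in>V. R i * (if adj i j then 1 else 0) / real (degree V adj i)) + (1 - c))"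

definition pagerank :: "'a set \<Rightarrow> ('a \<Rightarrow> 'a \<Rightarrow> bool) \<Rightarrow> real \<Rightarrow> 'a \<Rightarrow> real" where
  "pagerank V adj c = (THE R. is_pagerank V adj c R)"

definition unif_prob :: "'a set \<Rightarrow> ('a \<Rightarrow> bool) \<Rightarrow> real" where
  "unif_prob V P = real (card {v \<in> V. P v}) / real (card V)"

end

theory Submission
  imports Defs
begin

(* Away from the few endpoints of bridge edges, the connected graph is a disjoint union of
   regular graphs: a vertex of the circulant component G_{k,N} with k < N has degree k, and
   this component has about n p_k of the roughly n vertices, which gives (a) and its tail form.

   For (b), a graph whose random-walk matrix P has unit column sums (such as a disjoint union of
   regular graphs) has PageRank identically 1. The bridges change the rows of P only at their
   endpoints, at most 2 |D_n| of them, and R |-> c R P + (1 - c) is a c-contraction in l1;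
   hence sum_v |R_v - 1| <= 2c/(1-c) * 2 |D_n|. The components have distinct degrees k and more
   than k vertices each, so |D_n|^2 <= 2n, and Markov's inequality shows that the fraction of
   vertices with |R_v - 1| > epsilon is O(|D_n| / n) = o(1). *)


section \<open>PageRank of a finite graph\<close>

(* Rows of isolated vertices vanish (x / 0 = 0), so row sums are only bounded by 1. *)
definition trans_prob :: "'a set \<Rightarrow> ('a \<Rightarrow> 'a \<Rightarrow> bool) \<Rightarrow> 'a \<Rightarrow> 'a \<Rightarrow> real" where
  "trans_prob V adj i j = (if adj i j then 1 else 0) / real (degree V adj i)"

lemma trans_prob_nonneg: "trans_prob V adj i j \<ge> 0"
  by (simp add: trans_prob_def)

lemma sum_if_adj_eq_degree:
  assumes "finite V"
  shows "(\<Sum>j\<in>V. if adj i j then 1 else 0 :: real) = real (degree V adj i)"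
  using assms by (simp add: degree_def sum.If_cases Int_def)

lemma sum_trans_prob_le_1:
  assumes "finite V"
  shows "(\<Sum>j\<in>V. trans_prob V adj i j) \<le> 1"
  using sum_if_adj_eq_degree[OF assms, of adj i]
  by (simp add: trans_prob_def flip: sum_divide_distrib)

lemma sum_abs_sum_trans_prob_le:
  assumes "finite V"
  shows "(\<Sum>j\<in>V. \<bar>\<Sum>i\<in>V. D i * trans_prob V adj i j\<bar>) \<le> (\<Sum>i\<in>V. \<bar>D i\<bar>)"
proof -
  have "(\<Sum>j\<in>V. \<bar>\<Sum>i\<in>V. D i * trans_prob V adj i j\<bar>)
      \<le> (\<Sum>j\<in>V. \<Sum>i\<in>V. \<bar>D i\<bar> * trans_prob V adj i j)"
    by (intro sum_mono order.trans[OF sum_abs]) (simp add: abs_mult trans_prob_nonneg)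
  also have "\<dots> = (\<Sum>i\<in>V. \<bar>D i\<bar> * (\<Sum>j\<in>V. trans_prob V adj i j))"
    by (subst sum.swap) (simp add: sum_distrib_left)
  also have "\<dots> \<le> (\<Sum>i\<in>V. \<bar>D i\<bar>)"
    by (intro sum_mono) (simp add: sum_trans_prob_le_1[OF assms] mult_left_le)
  finally show ?thesis .
qed

definition pagerank_step ::
    "'a set \<Rightarrow> ('a \<Rightarrow> 'a \<Rightarrow> bool) \<Rightarrow> real \<Rightarrow> ('a \<Rightarrow> real) \<Rightarrow> 'a \<Rightarrow> real" where "pagerank_step V adj c R j =
    (if j \<in> V then c * (\<Sum>i\<in>V. R i * trans_prob V adj i j) + (1 - c) else 0)"

lemma is_pagerank_iff_fixpoint: "is_pagerank V adj c R \<longleftrightarrow> pagerank_step V adj c R = R"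
proof -
  have "is_pagerank V adj c R \<longleftrightarrow> (\<forall>v. v \<notin> V \<longrightarrow> R v = 0) \<and>
      (\<forall>j\<in>V. R j = c * (\<Sum>i\<in>V. R i * trans_prob V adj i j) + (1 - c))"
    by (simp add: is_pagerank_def trans_prob_def)
  then show ?thesis
    unfolding fun_eq_iff pagerank_step_def by metis
qed

lemma pagerank_step_contraction:
  assumes "finite V" "0 \<le> c"
  shows "(\<Sum>j\<in>V. \<bar>pagerank_step V adj c R1 j - pagerank_step V adj c R2 j\<bar>)
    \<le> c * (\<Sum>i\<in>V. \<bar>R1 i - R2 i\<bar>)"
proof -
  have "\<bar>pagerank_step V adj c R1 j - pagerank_step V adj c R2 j\<bar>
      = c * \<bar>\<Sum>i\<in>V. (R1 i - R2 i) * trans_prob V adj i j\<bar>" if "j \<in> V" for j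
    using that assms(2)
    by (simp add: pagerank_step_def left_diff_distrib sum_subtractf abs_mult
        flip: right_diff_distrib)
  then have "(\<Sum>j\<in>V. \<bar>pagerank_step V adj c R1 j - pagerank_step V adj c R2 j\<bar>)
      = c * (\<Sum>j\<in>V. \<bar>\<Sum>i\<in>V. (R1 i - R2 i) * trans_prob V adj i j\<bar>)"
    by (simp add: sum_distrib_left)
  also have "\<dots> \<le> c * (\<Sum>i\<in>V. \<bar>R1 i - R2 i\<bar>)"
    by (intro mult_left_mono sum_abs_sum_trans_prob_le assms)
  finally show ?thesis .
qed

lemma convergent_if_summable_increments:
  fixes X :: "nat \<Rightarrow> 'a::real_normed_vector"
  assumes "summable (\<lambda>n. X (Suc n) - X n)"
  shows "convergent X"
proof -
  have "(\<lambda>n. X n - X 0) \<longlonglongrightarrow> (\<Sum>n. X (Suc n) - X n)"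
    using summable_LIMSEQ[OF assms] by (simp add: sum_lessThan_telescope)
  then have "(\<lambda>n. X n - X 0 + X 0) \<longlonglongrightarrow> (\<Sum>n. X (Suc n) - X n) + X 0"
    by (intro tendsto_add tendsto_const)
  then show ?thesis
    by (auto simp: convergent_def)
qed

lemma pagerank_step_fixpoint_exists:
  assumes "finite V" "0 \<le> c" "c < 1"
  obtains R where "pagerank_step V adj c R = R"
proof -
  let ?F = "pagerank_step V adj c"
  define X where "X m = (?F ^^ m) (\<lambda>_. 0)" for m
  define \<delta> where "\<delta> = (\<Sum>j\<in>V. \<bar>X 1 j - X 0 j\<bar>)"
  have X_Suc: "X (Suc m) = ?F (X m)" for m
    by (simp add: X_def)
  have X_outside: "X m j = 0" if "j \<notin> V" for m j
    using that by (cases m) (simp_all add: X_def pagerank_step_def)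
  have increments: "(\<Sum>j\<in>V. \<bar>X (Suc m) j - X m j\<bar>) \<le> c ^ m * \<delta>" for m
  proof (induction m)
    case (Suc m)
    have "(\<Sum>j\<in>V. \<bar>X (Suc (Suc m)) j - X (Suc m) j\<bar>) \<le> c * (\<Sum>j\<in>V. \<bar>X (Suc m) j - X m j\<bar>)"
      unfolding X_Suc[of "Suc m"] X_Suc[of m] by (rule pagerank_step_contraction[OF assms(1,2)])
    also have "\<dots> \<le> c * (c ^ m * \<delta>)"
      using Suc assms(2) by (rule mult_left_mono)
    finally show ?case by simp
  qed (simp add: \<delta>_def)
  have bound: "\<bar>X (Suc m) j - X m j\<bar> \<le> \<delta> * c ^ m" for m j
  proof (cases "j \<in> V")
    case True
    then have "\<bar>X (Suc m) j - X m j\<bar> \<le> (\<Sum>j\<in>V. \<bar>X (Suc m) j - X m j\<bar>)"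
      by (intro member_le_sum assms) auto
    then show ?thesis
      using increments[of m] by (simp add: mult.commute)
  next
    case False
    then show ?thesis
      using assms by (simp add: X_outside \<delta>_def sum_nonneg)
  qed
  have geometric: "summable (\<lambda>m. \<delta> * c ^ m)"
    using assms by (intro summable_mult summable_geometric) auto
  have "convergent (\<lambda>m. X m j)" for j
  proof (rule convergent_if_summable_increments)
    show "summable (\<lambda>m. X (Suc m) j - X m j)"
      using geometric by (rule summable_comparison_test') (simp add: bound)
  qed
  then have X_lim: "(\<lambda>m. X m j) \<longlonglongrightarrow> lim (\<lambda>m. X m j)" for j
    by (simp add: convergent_LIMSEQ_iff)
  define R where "R j = lim (\<lambda>m. X m j)" for j
  have "?F R j = R j" for j
  proof (rule LIMSEQ_unique)
    show "(\<lambda>m. X (Suc m) j) \<longlonglongrightarrow> ?F R j"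
      unfolding X_Suc pagerank_step_def R_def
      by (cases "j \<in> V") (simp_all, intro tendsto_intros X_lim)
    show "(\<lambda>m. X (Suc m) j) \<longlonglongrightarrow> R j"
      unfolding R_def using X_lim by (rule LIMSEQ_Suc)
  qed
  then show thesis
    by (intro that ext)
qed

lemma pagerank_step_fixpoint_unique:
  assumes "finite V" "0 \<le> c" "c < 1"
    and R1: "pagerank_step V adj c R1 = R1" and R2: "pagerank_step V adj c R2 = R2"
  shows "R1 = R2"
proof -
  define d where "d = (\<Sum>j\<in>V. \<bar>R1 j - R2 j\<bar>)"
  have "d \<le> c * d"
    using pagerank_step_contraction[OF assms(1,2), of adj R1 R2] unfolding R1 R2 d_def .
  then have "(1 - c) * d \<le> 0"
    by (simp add: left_diff_distrib)
  then have "d \<le> 0"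
    using assms(3) by (simp add: mult_le_0_iff)
  then have "d = 0"
    by (simp add: d_def sum_nonneg order_antisym)
  then have "R1 j = R2 j" if "j \<in> V" for j
    using assms(1) that by (simp add: d_def sum_nonneg_eq_0_iff)
  moreover have "R1 j = R2 j" if "j \<notin> V" for j
    using that arg_cong[OF R1, of "\<lambda>R. R j"] arg_cong[OF R2, of "\<lambda>R. R j"]
    by (simp add: pagerank_step_def)
  ultimately show ?thesis
    by blast
qed

lemma is_pagerank_pagerank:
  assumes "finite V" "0 \<le> c" "c < 1"
  shows "is_pagerank V adj c (pagerank V adj c)"
proof -
  obtain R where R: "pagerank_step V adj c R = R"
    using pagerank_step_fixpoint_exists[OF assms] .
  have "pagerank V adj c = R"
    unfolding pagerank_def is_pagerank_iff_fixpoint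
    by (rule the_equality[of "\<lambda>R. pagerank_step V adj c R = R", OF R])
      (rule pagerank_step_fixpoint_unique[OF assms _ R])
  then show ?thesis
    using R by (simp add: is_pagerank_iff_fixpoint)
qed

lemma trans_prob_cong:
  assumes "\<And>j. adj i j = adj' i j"
  shows "trans_prob V adj i j = trans_prob V adj' i j"
  using assms by (simp add: trans_prob_def degree_def)

lemma sum_abs_colsum_trans_prob_diff_le:
  assumes "finite V" "B \<subseteq> V" and agree: "\<And>i j. i \<in> V \<Longrightarrow> i \<notin> B \<Longrightarrow> adj i j = adj' i j"
  shows "(\<Sum>j\<in>V. \<bar>\<Sum>i\<in>V. trans_prob V adj i j - trans_prob V adj' i j\<bar>) \<le> 2 * real (card B)"
proof -
  have "(\<Sum>j\<in>V. \<bar>\<Sum>i\<in>V. trans_prob V adj i j - trans_prob V adj' i j\<bar>)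
      \<le> (\<Sum>i\<in>V. \<Sum>j\<in>V. \<bar>trans_prob V adj i j - trans_prob V adj' i j\<bar>)"
    by (subst sum.swap) (intro sum_mono sum_abs)
  also have "\<dots> = (\<Sum>i\<in>B. \<Sum>j\<in>V. \<bar>trans_prob V adj i j - trans_prob V adj' i j\<bar>)"
  proof (intro sum.mono_neutral_right ballI)
    fix i assume "i \<in> V - B"
    then have "trans_prob V adj i j = trans_prob V adj' i j" for j
      using agree by (intro trans_prob_cong) auto
    then show "(\<Sum>j\<in>V. \<bar>trans_prob V adj i j - trans_prob V adj' i j\<bar>) = 0"
      by simp
  qed (use assms in auto)
  also have "\<dots> \<le> (\<Sum>i\<in>B. 2)"
  proof (intro sum_mono)
    fix i
    have "(\<Sum>j\<in>V. \<bar>trans_prob V adj i j - trans_prob V adj' i j\<bar>)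
        \<le> (\<Sum>j\<in>V. trans_prob V adj i j) + (\<Sum>j\<in>V. trans_prob V adj' i j)"
      by (subst sum.distrib[symmetric], intro sum_mono) (simp add: trans_prob_nonneg abs_le_iff)
    also have "\<dots> \<le> 2"
      using sum_trans_prob_le_1[OF assms(1), of adj i] sum_trans_prob_le_1[OF assms(1), of adj' i]
      by linarith
    finally show "(\<Sum>j\<in>V. \<bar>trans_prob V adj i j - trans_prob V adj' i j\<bar>) \<le> 2" .
  qed
  finally show ?thesis
    by simp
qed

lemma sum_abs_pagerank_minus_1_le:
  assumes fin: "finite V" and c: "0 \<le> c" "c < 1" and R: "is_pagerank V adj c R"
    and colsum: "\<And>j. j \<in> V \<Longrightarrow> (\<Sum>i\<in>V. trans_prob V adj' i j) = 1"
    and B: "B \<subseteq> V" and agree: "\<And>i j. i \<in> V \<Longrightarrow> i \<notin> B \<Longrightarrow> adj i j = adj' i j"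
  shows "(\<Sum>v\<in>V. \<bar>R v - 1\<bar>) \<le> 2 * c / (1 - c) * real (card B)"
proof -
  define D where "D v = R v - 1" for v
  define E where "E j = (\<Sum>i\<in>V. trans_prob V adj i j - trans_prob V adj' i j)" for j
  \<comment> \<open>The constant 1 solves the PageRank equation of adj', so R - 1 solves that of adj
    with the column defect c E as source term.\<close>
  have D_eq: "D j = c * (\<Sum>i\<in>V. D i * trans_prob V adj i j) + c * E j" if "j \<in> V" for j
  proof -
    have "c * (\<Sum>i\<in>V. D i * trans_prob V adj i j) + c * E j
        = c * (\<Sum>i\<in>V. R i * trans_prob V adj i j) - c * (\<Sum>i\<in>V. trans_prob V adj' i j)"
      by (simp add: D_def E_def left_diff_distrib sum_subtractf right_diff_distrib)
    also have "\<dots> = D j"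
    proof -
      have "c * (\<Sum>i\<in>V. R i * trans_prob V adj i j) + (1 - c) = R j"
        using fun_cong[OF R[unfolded is_pagerank_iff_fixpoint], of j] that
        by (simp add: pagerank_step_def)
      then show ?thesis
        unfolding D_def colsum[OF that] by linarith
    qed
    finally show ?thesis ..
  qed
  have "(\<Sum>j\<in>V. \<bar>D j\<bar>) \<le> (\<Sum>j\<in>V. c * \<bar>\<Sum>i\<in>V. D i * trans_prob V adj i j\<bar> + c * \<bar>E j\<bar>)"
  proof (intro sum_mono)
    fix j assume "j \<in> V"
    show "\<bar>D j\<bar> \<le> c * \<bar>\<Sum>i\<in>V. D i * trans_prob V adj i j\<bar> + c * \<bar>E j\<bar>"
      unfolding D_eq[OF \<open>j \<in> V\<close>] using c(1)
      by (intro order.trans[OF abs_triangle_ineq]) (simp add: abs_mult)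
  qed
  also have "\<dots> = c * (\<Sum>j\<in>V. \<bar>\<Sum>i\<in>V. D i * trans_prob V adj i j\<bar>) + c * (\<Sum>j\<in>V. \<bar>E j\<bar>)"
    by (simp add: sum.distrib sum_distrib_left)
  also have "\<dots> \<le> c * (\<Sum>j\<in>V. \<bar>D j\<bar>) + c * (2 * real (card B))"
    unfolding E_def using fin c(1)
    by (intro add_mono mult_left_mono sum_abs_sum_trans_prob_le sum_abs_colsum_trans_prob_diff_le[OF fin B] agree)
  finally have "(1 - c) * (\<Sum>j\<in>V. \<bar>D j\<bar>) \<le> c * (2 * real (card B))"
    by (simp add: left_diff_distrib)
  then show ?thesis
    using c by (simp add: D_def pos_le_divide_eq mult.commute mult.left_commute)
qed

lemma colsum_trans_prob_eq_1:
  assumes "finite V" "j \<in> V" "degree V adj j > 0"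
    and sym: "\<And>i j. adj i j \<Longrightarrow> adj j i"
    and same_degree: "\<And>i j. i \<in> V \<Longrightarrow> j \<in> V \<Longrightarrow> adj i j \<Longrightarrow> degree V adj i = degree V adj j"
  shows "(\<Sum>i\<in>V. trans_prob V adj i j) = 1"
proof -
  have "trans_prob V adj i j = (if adj j i then 1 else 0) / real (degree V adj j)" if "i \<in> V" for i
  proof (cases "adj i j")
    case True
    then show ?thesis
      using same_degree[OF that assms(2) True] sym[OF True] by (simp add: trans_prob_def)
  next
    case False
    then have "\<not> adj j i"
      using sym by blast
    with False show ?thesis
      by (simp add: trans_prob_def)
  qed
  then have "(\<Sum>i\<in>V. trans_prob V adj i j)
      = (\<Sum>i\<in>V. if adj j i then 1 else 0) / real (degree V adj j)"
    by (simp add: sum_divide_distrib)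
  then show ?thesis
    using assms(3) by (simp add: sum_if_adj_eq_degree[OF assms(1)])
qed

section \<open>Uniformly chosen vertices\<close>

lemma unif_prob_not:
  assumes "finite V" "V \<noteq> {}"
  shows "unif_prob V (\<lambda>v. \<not> P v) = 1 - unif_prob V P"
proof -
  have "card {v \<in> V. \<not> P v} = card V - card {v \<in> V. P v}"
    using assms(1) by (subst card_Diff_subset[symmetric]) (auto intro: arg_cong[where f = card])
  moreover have "card {v \<in> V. P v} \<le> card V"
    using assms(1) by (intro card_mono) auto
  ultimately show ?thesis
    using assms by (simp add: unif_prob_def of_nat_diff diff_divide_distrib)
qed

lemma unif_prob_mem_eq_sum:
  assumes "finite V" "finite F"
  shows "unif_prob V (\<lambda>v. d v \<in> F) = (\<Sum>k\<in>F. unif_prob V (\<lambda>v. d v = k))"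
proof -
  have "{v \<in> V. d v \<in> F} = (\<Union>k\<in>F. {v \<in> V. d v = k})"
    by auto
  then have "card {v \<in> V. d v \<in> F} = (\<Sum>k\<in>F. card {v \<in> V. d v = k})"
    using assms by (simp, intro card_UN_disjoint) auto
  then show ?thesis
    by (simp add: unif_prob_def sum_divide_distrib)
qed

lemma abs_unif_prob_diff_le:
  assumes "finite V" "B \<subseteq> V" "\<And>v. v \<in> V \<Longrightarrow> v \<notin> B \<Longrightarrow> P v \<longleftrightarrow> Q v"
  shows "\<bar>unif_prob V P - unif_prob V Q\<bar> \<le> real (card B) / real (card V)"
proof -
  have card_le: "card {v \<in> V. P' v} \<le> card {v \<in> V. Q' v} + card B"
    if "\<And>v. v \<in> V \<Longrightarrow> v \<notin> B \<Longrightarrow> P' v \<Longrightarrow> Q' v" for P' Q'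
  proof -
    have "card {v \<in> V. P' v} \<le> card ({v \<in> V. Q' v} \<union> B)"
      using that assms(1,2) by (intro card_mono) (auto intro: finite_subset)
    also have "\<dots> \<le> card {v \<in> V. Q' v} + card B"
      by (rule card_Un_le)
    finally show ?thesis .
  qed
  have "\<bar>real (card {v \<in> V. P v}) - real (card {v \<in> V. Q v})\<bar> \<le> real (card B)"
    using card_le[of P Q] card_le[of Q P] assms(3) by fastforce
  then show ?thesis
    by (simp add: unif_prob_def divide_right_mono flip: diff_divide_distrib)
qed

lemma unif_prob_abs_gt_le:
  assumes "finite V" "\<epsilon> > 0"
  shows "unif_prob V (\<lambda>v. \<bar>f v\<bar> > \<epsilon>) \<le> (\<Sum>v\<in>V. \<bar>f v\<bar>) / (\<epsilon> * real (card V))"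
proof -
  have "real (card {v \<in> V. \<bar>f v\<bar> > \<epsilon>}) * \<epsilon> = (\<Sum>v \<in> {v \<in> V. \<bar>f v\<bar> > \<epsilon>}. \<epsilon>)"
    by simp
  also have "\<dots> \<le> (\<Sum>v \<in> {v \<in> V. \<bar>f v\<bar> > \<epsilon>}. \<bar>f v\<bar>)"
    by (intro sum_mono) auto
  also have "\<dots> \<le> (\<Sum>v\<in>V. \<bar>f v\<bar>)"
    using assms(1) by (intro sum_mono2) auto
  finally have "real (card {v \<in> V. \<bar>f v\<bar> > \<epsilon>}) \<le> (\<Sum>v\<in>V. \<bar>f v\<bar>) / \<epsilon>"
    using assms(2) by (simp add: pos_le_divide_eq)
  then have "real (card {v \<in> V. \<bar>f v\<bar> > \<epsilon>}) / real (card V)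
      \<le> (\<Sum>v\<in>V. \<bar>f v\<bar>) / \<epsilon> / real (card V)"
    by (rule divide_right_mono) simp
  then show ?thesis
    by (simp add: unif_prob_def)
qed

section \<open>Circulant graphs\<close>

lemma eq_if_dvd_diff_less:
  assumes "x < N" "y < N" "int N dvd int x - int y"
  shows "x = y"
proof (rule ccontr)
  assume "x \<noteq> y"
  then have "int N \<le> \<bar>int x - int y\<bar>"
    using dvd_imp_le_int[OF _ assms(3)] by simp
  with assms(1,2) show False
    by linarith
qed

lemma circ_adj_sym:
  assumes "circ_adj k N i j"
  shows "circ_adj k N j i"
proof -
  define d where "d = (int i - int j) mod int N"
  have ij: "i < N" "j < N" "i \<noteq> j"
    using assms by (auto simp: circ_adj_def)
  then have "d \<noteq> 0"
    using eq_if_dvd_diff_less[of i N j] by (auto simp: d_def mod_eq_0_iff_dvd)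
  then have "(int j - int i) mod int N = int N - d"
    using zmod_zminus1_eq_if[of "int i - int j" "int N"] by (simp add: d_def)
  moreover have "(1 \<le> d \<and> d \<le> int (k div 2)) \<or> (int N - int (k div 2) \<le> d \<and> d \<le> int N - 1)"
    using assms unfolding circ_adj_def Let_def d_def by blast
  ultimately show ?thesis
    using ij by (auto simp: circ_adj_def Let_def)
qed

lemma bij_betw_diff_mod:
  assumes "i < N"
  shows "bij_betw (\<lambda>j. nat ((int i - int j) mod int N)) {..<N} {..<N}"
proof -
  let ?g = "\<lambda>j. nat ((int i - int j) mod int N)"
  have g: "int (?g j) = (int i - int j) mod int N" for j
    using assms by simp
  have "inj_on ?g {..<N}"
  proof (rule inj_onI)
    fix x y assume "x \<in> {..<N}" "y \<in> {..<N}" "?g x = ?g y"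
    then have "x < N" "y < N" "(int i - int x) mod int N = (int i - int y) mod int N"
      using g by (auto, metis)
    then show "x = y"
      by (intro eq_if_dvd_diff_less) (auto simp: mod_eq_dvd_iff dvd_diff_commute)
  qed
  moreover have "?g ` {..<N} \<subseteq> {..<N}"
    using assms by (auto simp: nat_less_iff)
  ultimately show ?thesis
    by (simp add: bij_betw_def endo_inj_surj)
qed

lemma card_circ_adj:
  assumes "k < N" "i < N"
  shows "card {j. circ_adj k N i j} = 2 * (k div 2)"
proof -
  define h where "h = k div 2"
  define g where "g j = nat ((int i - int j) mod int N)" for j
  define A where "A = {1..h} \<union> {N - h..<N}"
  have "2 * h < N"
    using assms by (simp add: h_def)
  then have A: "A \<subseteq> {..<N}" "card A = h + h"
    unfolding A_def by (auto, subst card_Un_disjoint) auto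
  have bij: "bij_betw g {..<N} {..<N}"
    unfolding g_def using assms(2) by (rule bij_betw_diff_mod)
  have g: "int (g j) = (int i - int j) mod int N" for j
    using assms by (simp add: g_def)
  have g_eq_0: "g j = 0 \<longleftrightarrow> j = i" if "j < N" for j
  proof -
    have "g j = 0 \<longleftrightarrow> int N dvd int i - int j"
      by (metis g of_nat_eq_0_iff mod_eq_0_iff_dvd)
    then show ?thesis
      using eq_if_dvd_diff_less[of i N j] that assms(2) by auto
  qed
  have "g ` {j \<in> {..<N}. g j \<in> A} = g ` {..<N} \<inter> A"
    by blast
  also have "\<dots> = A"
    using bij A(1) by (auto simp: bij_betw_def)
  finally have image: "g ` {j \<in> {..<N}. g j \<in> A} = A" .
  have neighbours: "{j. circ_adj k N i j} = {j \<in> {..<N}. g j \<in> A}"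
    using \<open>2 * h < N\<close> assms(2) g_eq_0[of i]
    by (auto simp: circ_adj_def Let_def A_def h_def g[symmetric])
  have "card {j \<in> {..<N}. g j \<in> A} = card (g ` {j \<in> {..<N}. g j \<in> A})"
    by (intro card_image[symmetric] inj_on_subset[OF bij_betw_imp_inj_on[OF bij]]) auto
  then show ?thesis
    unfolding neighbours image using A(2) h_def by simp
qed

section \<open>The union of circulant graphs and its bridges\<close>

lemma Nkn_le: "0 \<le> p k \<Longrightarrow> real (Nkn p k n) \<le> real n * p k"
  by (simp add: Nkn_def)

lemma Nkn_gt: "real n * p k - 1 < real (Nkn p k n)"
  unfolding Nkn_def by linarith

lemma tendsto_Nkn_over_n:
  assumes "0 \<le> p k"
  shows "(\<lambda>n. real (Nkn p k n) / real n) \<longlonglongrightarrow> p k"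
proof (rule tendsto_sandwich[where f = "\<lambda>n. p k - 1 / real n" and h = "\<lambda>_. p k"])
  show "\<forall>\<^sub>F n in sequentially. p k - 1 / real n \<le> real (Nkn p k n) / real n"
    using eventually_gt_at_top[of 0]
  proof eventually_elim
    case (elim n)
    then have "p k - 1 / real n = (real n * p k - 1) / real n"
      by (simp add: field_simps)
    also have "\<dots> \<le> real (Nkn p k n) / real n"
      using Nkn_gt[of n p k] by (intro divide_right_mono) auto
    finally show ?case .
  qed
  show "\<forall>\<^sub>F n in sequentially. real (Nkn p k n) / real n \<le> p k"
    using eventually_gt_at_top[of 0]
  proof eventually_elim
    case (elim n)
    then show ?case
      using Nkn_le[of p k n] assms by (simp add: field_simps)
  qed
  show "(\<lambda>n. p k - 1 / real n) \<longlonglongrightarrow> p k"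
    by (intro tendsto_eq_intros) auto
qed simp

lemma finite_Dset: "finite (Dset p M n)"
  by (rule finite_subset[of _ "{..M n}"]) (auto simp: Dset_def)

lemma Vset_eq_Sigma: "Vset p M n = Sigma (Dset p M n) (\<lambda>k. {..<Nkn p k n})"
  by (auto simp: Vset_def)

lemma finite_Vset: "finite (Vset p M n)"
  by (simp add: Vset_eq_Sigma finite_Dset)

lemma card_Vset: "card (Vset p M n) = (\<Sum>k\<in>Dset p M n. Nkn p k n)"
  by (simp add: Vset_eq_Sigma finite_Dset card_SigmaI)

lemma G_adj_sym: "G_adj p M n u v \<Longrightarrow> G_adj p M n v u"
  unfolding G_adj_def using circ_adj_sym by metis

lemma degree_G_adj:
  assumes "v \<in> Vset p M n" "fst v < Nkn p (fst v) n"
  shows "degree (Vset p M n) (G_adj p M n) v = fst v"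
proof -
  obtain k i where v: "v = (k, i)"
    by fastforce
  have "{u \<in> Vset p M n. G_adj p M n v u} = Pair k ` {j. circ_adj k (Nkn p k n) i j}"
    using assms(1) by (auto simp: v G_adj_def Vset_def circ_adj_def)
  then have "degree (Vset p M n) (G_adj p M n) v = card {j. circ_adj k (Nkn p k n) i j}"
    by (simp add: degree_def card_image inj_on_def)
  also have "\<dots> = 2 * (k div 2)"
    using assms by (intro card_circ_adj) (auto simp: v Vset_def)
  also have "\<dots> = k"
    using assms(1) by (auto simp: v Vset_def Dset_def)
  finally show ?thesis
    by (simp add: v)
qed

lemma colsum_G_adj_eq_1:
  assumes "\<And>k. k \<in> Dset p M n \<Longrightarrow> k < Nkn p k n" "j \<in> Vset p M n"
  shows "(\<Sum>i\<in>Vset p M n. trans_prob (Vset p M n) (G_adj p M n) i j) = 1"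
proof (rule colsum_trans_prob_eq_1[OF finite_Vset assms(2)])
  have degree: "degree (Vset p M n) (G_adj p M n) v = fst v" if "v \<in> Vset p M n" for v
    using that assms(1) by (intro degree_G_adj) (auto simp: Vset_def)
  show "degree (Vset p M n) (G_adj p M n) j > 0"
    using degree[OF assms(2)] assms(2) by (auto simp: Vset_def Dset_def)
  show "G_adj p M n i' j' \<Longrightarrow> G_adj p M n j' i'" for i' j'
    by (rule G_adj_sym)
  show "degree (Vset p M n) (G_adj p M n) i' = degree (Vset p M n) (G_adj p M n) j'"
    if "i' \<in> Vset p M n" "j' \<in> Vset p M n" "G_adj p M n i' j'" for i' j'
    using that by (simp add: degree G_adj_def)
qed

definition bridge_ends :: "(nat \<Rightarrow> real) \<Rightarrow> (nat \<Rightarrow> nat) \<Rightarrow> (nat \<Rightarrow> nat \<Rightarrow> nat)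
    \<Rightarrow> (nat \<Rightarrow> nat \<Rightarrow> nat) \<Rightarrow> nat \<Rightarrow> (nat \<times> nat) set" where
  "bridge_ends p M a b n = {v \<in> Vset p M n. \<exists>u. bridge p M a b n v u \<or> bridge p M a b n u v}"

lemma bridge_ends_subset_Vset: "bridge_ends p M a b n \<subseteq> Vset p M n"
  by (auto simp: bridge_ends_def)

lemma tG_adj_eq_G_adj:
  assumes "v \<in> Vset p M n" "v \<notin> bridge_ends p M a b n"
  shows "tG_adj p M a b n v u = G_adj p M n v u"
  using assms unfolding bridge_ends_def tG_adj_def by blast

lemma consec_eq_Least:
  assumes "consec D k l"
  shows "l = (LEAST l. l \<in> D \<and> k < l)"
  using assms unfolding consec_def by (intro Least_equality[symmetric]) (auto simp: not_less[symmetric])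

lemma card_bridge_ends_le: "card (bridge_ends p M a b n) \<le> 2 * card (Dset p M n)"
proof -
  let ?D = "Dset p M n"
  \<comment> \<open>The bridge leaving component k ends in the next component, the least l \<in> D above k.\<close>
  let ?left = "(\<lambda>k. (k, a n k)) ` ?D"
    and ?right = "(\<lambda>k. (LEAST l. l \<in> ?D \<and> k < l, b n k)) ` ?D"
  have "bridge_ends p M a b n \<subseteq> ?left \<union> ?right"
  proof
    fix v assume "v \<in> bridge_ends p M a b n"
    then obtain u where "bridge p M a b n v u \<or> bridge p M a b n u v"
      by (auto simp: bridge_ends_def)
    then show "v \<in> ?left \<union> ?right"
    proof
      assume "bridge p M a b n v u"
      then have "fst v \<in> ?D" "v = (fst v, a n (fst v))"
        by (auto simp: bridge_def consec_def prod_eq_iff)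
      then show ?thesis
        by blast
    next
      assume "bridge p M a b n u v"
      then have "fst u \<in> ?D" "v = (LEAST l. l \<in> ?D \<and> fst u < l, b n (fst u))"
        using consec_eq_Least by (auto simp: bridge_def consec_def prod_eq_iff)
      then show ?thesis
        by blast
    qed
  qed
  then have "card (bridge_ends p M a b n) \<le> card (?left \<union> ?right)"
    by (intro card_mono) (simp_all add: finite_Dset)
  also have "\<dots> \<le> card ?D + card ?D"
    by (intro order.trans[OF card_Un_le] add_mono card_image_le finite_Dset)
  finally show ?thesis
    by simp
qed

lemma card_mult_Suc_card_le_sum:
  fixes A :: "nat set"
  assumes "finite A"
  shows "card A * (card A + 1) \<le> 2 * (\<Sum>k\<in>A. k + 1)"
  using assms
proof (induction "card A" arbitrary: A)
  case (Suc m)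
  define x where "x = Max A"
  have "A \<noteq> {}"
    using Suc.hyps(2) by auto
  then have "x \<in> A"
    using Suc.prems by (simp add: x_def)
  then have "card (A - {x}) = m"
    using Suc.hyps(2) Suc.prems by (simp add: card_Diff_singleton)
  have "A \<subseteq> {..x}"
    using Suc.prems by (auto simp: x_def)
  then have "card A \<le> x + 1"
    using card_mono[of "{..x}" A] by simp
  have "card A * (card A + 1) = m * (m + 1) + 2 * (m + 1)"
    using Suc.hyps(2)[symmetric] by (simp add: algebra_simps)
  also have "\<dots> \<le> 2 * (\<Sum>k\<in>A - {x}. k + 1) + 2 * (x + 1)"
    using Suc.hyps(1)[of "A - {x}"] Suc.prems Suc.hyps(2) \<open>card (A - {x}) = m\<close>
      \<open>card A \<le> x + 1\<close>
    by (intro add_mono) simp_all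
  also have "\<dots> = 2 * (\<Sum>k\<in>A. k + 1)"
    using Suc.prems \<open>x \<in> A\<close> by (simp add: sum.remove)
  finally show ?case .
qed simp

lemma card_Dset_squared_le_card_Vset:
  assumes "\<And>k. k \<in> Dset p M n \<Longrightarrow> k < Nkn p k n"
  shows "card (Dset p M n) * card (Dset p M n) \<le> 2 * card (Vset p M n)"
proof -
  have "card (Dset p M n) * card (Dset p M n) \<le> 2 * (\<Sum>k\<in>Dset p M n. k + 1)"
    using card_mult_Suc_card_le_sum[OF finite_Dset, of p M n] by simp
  also have "\<dots> \<le> 2 * card (Vset p M n)"
    using assms by (simp add: card_Vset Suc_le_eq sum_mono)
  finally show ?thesis .
qed

section \<open>Asymptotics\<close>

locale circulant_union =
  fixes p :: "nat \<Rightarrow> real" and M :: "nat \<Rightarrow> nat" and a b :: "nat \<Rightarrow> nat \<Rightarrow> nat"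
  assumes p_nonneg: "\<And>k. p k \<ge> 0"
    and p_sums: "p sums 1"
    and p_zero: "p 0 = 0"
    and p_odd: "\<And>k. odd k \<Longrightarrow> p k = 0"
    and M_div: "filterlim M at_top sequentially"
    and M_slow: "\<And>n k. k \<in> Dset p M n \<Longrightarrow> k + 1 \<le> Nkn p k n"
begin

abbreviation V :: "nat \<Rightarrow> (nat \<times> nat) set" where "V n \<equiv> Vset p M n"
abbreviation D :: "nat \<Rightarrow> nat set" where "D n \<equiv> Dset p M n"
abbreviation deg :: "nat \<Rightarrow> nat \<times> nat \<Rightarrow> nat" where
  "deg n \<equiv> degree (V n) (tG_adj p M a b n)"

lemma Dset_iff: "k \<in> D n \<longleftrightarrow> k \<le> M n \<and> p k \<noteq> 0"
  using p_odd[of k] p_zero p_nonneg[of k] by (cases "k = 0") (auto simp: Dset_def)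

lemma less_Nkn: "k \<in> D n \<Longrightarrow> k < Nkn p k n"
  using M_slow[of k n] by simp

lemma sum_Dset_tendsto: "(\<lambda>n. \<Sum>k\<in>D n. p k) \<longlonglongrightarrow> 1"
proof -
  have "(\<Sum>k\<in>D n. p k) = (\<Sum>k<Suc (M n). p k)" for n
    by (rule sum.mono_neutral_left) (auto simp: Dset_iff)
  moreover have "(\<lambda>n. \<Sum>k<Suc (M n). p k) \<longlonglongrightarrow> 1"
    using p_sums unfolding sums_def
    by (rule filterlim_compose)
      (rule filterlim_subseq[THEN filterlim_compose[OF _ M_div]]; simp add: strict_mono_Suc_iff)
  ultimately show ?thesis
    by simp
qed

lemma sum_Dset_le_1: "(\<Sum>k\<in>D n. p k) \<le> 1"
  using sum_le_suminf[of p "D n"] p_sums p_nonneg finite_Dset by (auto simp: sums_iff)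

lemma card_Vset_le: "real (card (V n)) \<le> real n"
proof -
  have "real (card (V n)) \<le> (\<Sum>k\<in>D n. real n * p k)"
    by (simp add: card_Vset sum_mono Nkn_le p_nonneg)
  also have "\<dots> \<le> real n"
    using sum_Dset_le_1[of n] by (simp add: mult_left_le flip: sum_distrib_left)
  finally show ?thesis .
qed

lemma card_Vset_ge: "real n * (\<Sum>k\<in>D n. p k) - real (card (D n)) \<le> real (card (V n))"
proof -
  have "real n * (\<Sum>k\<in>D n. p k) - real (card (D n)) = (\<Sum>k\<in>D n. real n * p k - 1)"
    by (simp add: sum_distrib_left sum_subtractf)
  also have "\<dots> \<le> real (card (V n))"
    by (simp add: card_Vset sum_mono less_imp_le Nkn_gt)
  finally show ?thesis .
qed

lemma card_Dset_squared_le: "real (card (D n)) ^ 2 \<le> 2 * real n"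
proof -
  have "real (card (D n)) ^ 2 \<le> 2 * real (card (V n))"
    using card_Dset_squared_le_card_Vset[of p M n] less_Nkn by (simp add: power2_eq_square flip: of_nat_mult)
  then show ?thesis
    using card_Vset_le[of n] by linarith
qed

lemma card_Dset_over_n: "(\<lambda>n. real (card (D n)) / real n) \<longlonglongrightarrow> 0"
proof (rule tendsto_sandwich[where f = "\<lambda>_. 0" and h = "\<lambda>n. sqrt (2 / real n)"])
  show "\<forall>\<^sub>F n in sequentially. real (card (D n)) / real n \<le> sqrt (2 / real n)"
    using eventually_gt_at_top[of 0]
  proof eventually_elim
    case (elim n)
    have "(real (card (D n)) / real n) ^ 2 \<le> 2 / real n"
      using card_Dset_squared_le[of n] elim by (simp add: power_divide field_simps power2_eq_square)
    then show ?case
      by (simp add: real_le_rsqrt)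
  qed
  show "(\<lambda>n. sqrt (2 / real n)) \<longlonglongrightarrow> 0"
    using tendsto_real_sqrt[OF lim_const_over_n[of 2]] by simp
qed auto

lemma card_Vset_over_n: "(\<lambda>n. real (card (V n)) / real n) \<longlonglongrightarrow> 1"
proof (rule tendsto_sandwich[where f = "\<lambda>n. (\<Sum>k\<in>D n. p k) - real (card (D n)) / real n"
      and h = "\<lambda>_. 1"])
  show "\<forall>\<^sub>F n in sequentially.
      (\<Sum>k\<in>D n. p k) - real (card (D n)) / real n \<le> real (card (V n)) / real n"
    using eventually_gt_at_top[of 0]
  proof eventually_elim
    case (elim n)
    then have "(\<Sum>k\<in>D n. p k) - real (card (D n)) / real n
        = (real n * (\<Sum>k\<in>D n. p k) - real (card (D n))) / real n"
      by (simp add: field_simps)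
    also have "\<dots> \<le> real (card (V n)) / real n"
      using card_Vset_ge[of n] by (intro divide_right_mono) auto
    finally show ?case .
  qed
  show "\<forall>\<^sub>F n in sequentially. real (card (V n)) / real n \<le> 1"
    using card_Vset_le by (intro always_eventually) (auto simp: divide_le_eq_1)
  show "(\<lambda>n. (\<Sum>k\<in>D n. p k) - real (card (D n)) / real n) \<longlonglongrightarrow> 1"
    using tendsto_diff[OF sum_Dset_tendsto card_Dset_over_n] by simp
qed simp

lemma eventually_Vset_nonempty: "\<forall>\<^sub>F n in sequentially. V n \<noteq> {}"
proof -
  have "\<forall>\<^sub>F n in sequentially. 0 < real (card (V n)) / real n"
    using order_tendstoD(1)[OF card_Vset_over_n] by simp
  then show ?thesis
    by eventually_elim auto
qed

lemma card_Dset_over_card_Vset: "(\<lambda>n. real (card (D n)) / real (card (V n))) \<longlonglongrightarrow> 0"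
proof -
  have "(\<lambda>n. (real (card (D n)) / real n) / (real (card (V n)) / real n)) \<longlonglongrightarrow> 0 / 1"
    by (intro tendsto_divide card_Dset_over_n card_Vset_over_n) auto
  moreover have "\<forall>\<^sub>F n in sequentially. (real (card (D n)) / real n) / (real (card (V n)) / real n)
      = real (card (D n)) / real (card (V n))"
    using eventually_gt_at_top[of 0] by eventually_elim simp
  ultimately show ?thesis
    using Lim_transform_eventually by fastforce
qed

lemma component_fraction_tendsto: "(\<lambda>n. unif_prob (V n) (\<lambda>v. fst v = k)) \<longlonglongrightarrow> p k"
proof (cases "p k = 0")
  case True
  then have none: "{v \<in> V n. fst v = k} = {}" for n
    by (auto simp: Vset_def Dset_iff)
  show ?thesis
    unfolding unif_prob_def none True by simp
next
  case False
  have "(\<lambda>n. (real (Nkn p k n) / real n) / (real (card (V n)) / real n)) \<longlonglongrightarrow> p k / 1"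
    by (intro tendsto_divide tendsto_Nkn_over_n card_Vset_over_n p_nonneg) auto
  moreover have "\<forall>\<^sub>F n in sequentially. (real (Nkn p k n) / real n) / (real (card (V n)) / real n)
      = unif_prob (V n) (\<lambda>v. fst v = k)"
    using eventually_gt_at_top[of 0] M_div[unfolded filterlim_at_top, rule_format, of k]
  proof eventually_elim
    case (elim n)
    then have "{v \<in> V n. fst v = k} = Pair k ` {..<Nkn p k n}"
      using False by (auto simp: Vset_def Dset_iff)
    then show ?case
      using elim by (simp add: unif_prob_def card_image inj_on_def)
  qed
  ultimately show ?thesis
    using Lim_transform_eventually by fastforce
qed

lemma degree_eq_fst:
  assumes "v \<in> V n" "v \<notin> bridge_ends p M a b n"
  shows "deg n v = fst v"
proof -
  have "deg n v = degree (V n) (G_adj p M n) v"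
    using tG_adj_eq_G_adj[OF assms] by (simp add: degree_def)
  also have "\<dots> = fst v"
    using assms(1) less_Nkn by (intro degree_G_adj) (auto simp: Vset_def)
  finally show ?thesis .
qed

lemma bridge_fraction_le:
  "real (card (bridge_ends p M a b n)) / real (card (V n)) \<le> 2 * (real (card (D n)) / real (card (V n)))"
proof -
  have "real (card (bridge_ends p M a b n)) \<le> 2 * real (card (D n))"
    using card_bridge_ends_le[of p M a b n] by linarith
  then show ?thesis
    by (simp add: divide_right_mono)
qed

lemma degree_distribution_tendsto: "(\<lambda>n. unif_prob (V n) (\<lambda>v. deg n v = k)) \<longlonglongrightarrow> p k"
proof -
  have "(\<lambda>n. unif_prob (V n) (\<lambda>v. deg n v = k) - unif_prob (V n) (\<lambda>v. fst v = k)) \<longlonglongrightarrow> 0"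
  proof (rule Lim_null_comparison)
    have "norm (unif_prob (V n) (\<lambda>v. deg n v = k) - unif_prob (V n) (\<lambda>v. fst v = k))
        \<le> 2 * (real (card (D n)) / real (card (V n)))" for n
      unfolding real_norm_def
      by (rule order.trans[OF abs_unif_prob_diff_le[OF finite_Vset bridge_ends_subset_Vset]
            bridge_fraction_le]) (simp add: degree_eq_fst)
    then show "\<forall>\<^sub>F n in sequentially.
        norm (unif_prob (V n) (\<lambda>v. deg n v = k) - unif_prob (V n) (\<lambda>v. fst v = k))
          \<le> 2 * (real (card (D n)) / real (card (V n)))"
      by (simp add: always_eventually)
    show "(\<lambda>n. 2 * (real (card (D n)) / real (card (V n)))) \<longlonglongrightarrow> 0"
      by (intro tendsto_mult_right_zero card_Dset_over_card_Vset)
  qed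
  from tendsto_add[OF this component_fraction_tendsto[of k]] show ?thesis
    by simp
qed

lemma degree_tail_tendsto:
  "(\<lambda>n. unif_prob (V n) (\<lambda>v. real (deg n v) > x)) \<longlonglongrightarrow> (\<Sum>k. if real k > x then p k else 0)"
proof -
  define F where "F = {k. real k \<le> x}"
  have "F \<subseteq> {..nat \<lceil>x\<rceil>}"
    by (auto simp: F_def le_nat_iff le_ceiling_iff)
  then have "finite F"
    by (rule finite_subset) simp
  have "(\<lambda>k. p k - (if k \<in> F then p k else 0)) sums (1 - (\<Sum>k\<in>F. p k))"
    by (intro sums_diff p_sums sums_If_finite_set \<open>finite F\<close>)
  moreover have "(\<lambda>k. p k - (if k \<in> F then p k else 0)) = (\<lambda>k. if real k > x then p k else 0)"
    by (auto simp: F_def fun_eq_iff)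
  ultimately have tail: "(\<Sum>k. if real k > x then p k else 0) = 1 - (\<Sum>k\<in>F. p k)"
    by (simp add: sums_iff)
  have "(\<lambda>n. 1 - (\<Sum>k\<in>F. unif_prob (V n) (\<lambda>v. deg n v = k))) \<longlonglongrightarrow> 1 - (\<Sum>k\<in>F. p k)"
    by (intro tendsto_intros degree_distribution_tendsto)
  moreover have "\<forall>\<^sub>F n in sequentially.
      1 - (\<Sum>k\<in>F. unif_prob (V n) (\<lambda>v. deg n v = k)) = unif_prob (V n) (\<lambda>v. real (deg n v) > x)"
    using eventually_Vset_nonempty
  proof eventually_elim
    case (elim n)
    have "(\<lambda>v. real (deg n v) > x) = (\<lambda>v. \<not> deg n v \<in> F)"
      by (auto simp: F_def fun_eq_iff)
    then show ?case
      using unif_prob_not[OF finite_Vset elim] unif_prob_mem_eq_sum[OF finite_Vset \<open>finite F\<close>]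
      by simp
  qed
  ultimately show ?thesis
    unfolding tail using Lim_transform_eventually by fastforce
qed

lemma pagerank_deviation_tendsto:
  assumes c: "0 < c" "c < 1" and "\<epsilon> > 0"
  shows "(\<lambda>n. unif_prob (V n) (\<lambda>v. \<bar>pagerank (V n) (tG_adj p M a b n) c v - 1\<bar> > \<epsilon>)) \<longlonglongrightarrow> 0"
proof (rule Lim_null_comparison)
  define K where "K = 2 * c / ((1 - c) * \<epsilon>)"
  show "\<forall>\<^sub>F n in sequentially.
      norm (unif_prob (V n) (\<lambda>v. \<bar>pagerank (V n) (tG_adj p M a b n) c v - 1\<bar> > \<epsilon>))
        \<le> K * (2 * (real (card (D n)) / real (card (V n))))"
  proof (intro always_eventually allI)
    fix n
    let ?R = "pagerank (V n) (tG_adj p M a b n) c"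
    let ?B = "bridge_ends p M a b n"
    have "(\<Sum>v\<in>V n. \<bar>?R v - 1\<bar>) \<le> 2 * c / (1 - c) * real (card ?B)"
      using c less_Nkn tG_adj_eq_G_adj
      by (intro sum_abs_pagerank_minus_1_le[OF finite_Vset _ _ is_pagerank_pagerank[OF finite_Vset]
            colsum_G_adj_eq_1 bridge_ends_subset_Vset]) auto
    then have "unif_prob (V n) (\<lambda>v. \<bar>?R v - 1\<bar> > \<epsilon>)
        \<le> 2 * c / (1 - c) * real (card ?B) / (\<epsilon> * real (card (V n)))"
      using assms(3)
      by (intro order.trans[OF unif_prob_abs_gt_le[OF finite_Vset]] divide_right_mono) auto
    also have "\<dots> = K * (real (card ?B) / real (card (V n)))"
      by (simp add: K_def)
    also have "\<dots> \<le> K * (2 * (real (card (D n)) / real (card (V n))))"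
      using c assms(3) by (intro mult_left_mono bridge_fraction_le) (simp add: K_def)
    finally show "norm (unif_prob (V n) (\<lambda>v. \<bar>?R v - 1\<bar> > \<epsilon>))
        \<le> K * (2 * (real (card (D n)) / real (card (V n))))"
      by (simp add: unif_prob_def)
  qed
  show "(\<lambda>n. K * (2 * (real (card (D n)) / real (card (V n))))) \<longlonglongrightarrow> 0"
    by (intro tendsto_mult_right_zero card_Dset_over_card_Vset)
qed

end

theorem mainTheorem12:
  fixes p :: "nat \<Rightarrow> real" and c :: real and M :: "nat \<Rightarrow> nat"
    and a b :: "nat \<Rightarrow> nat \<Rightarrow> nat"
  assumes p_nonneg: "\<And>k. p k \<ge> 0"
    and p_sums: "p sums 1"
    and p_zero: "p 0 = 0"
    and p_odd: "\<And>k. odd k \<Longrightarrow> p k = 0"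
    and c: "0 < c" "c < 1"
    and M_div: "filterlim M at_top sequentially"
    and M_slow: "\<And>n k. k \<in> Dset p M n \<Longrightarrow> k + 1 \<le> Nkn p k n"
    and ab: "\<And>n k l. consec (Dset p M n) k l \<Longrightarrow> a n k < Nkn p k n \<and> b n k < Nkn p l n"
  shows "(\<forall>k. (\<lambda>n. unif_prob (Vset p M n)
              (\<lambda>v. degree (Vset p M n) (tG_adj p M a b n) v = k)) \<longlonglongrightarrow> p k)
       \<and> (\<forall>x::real. (\<lambda>n. unif_prob (Vset p M n)
              (\<lambda>v. real (degree (Vset p M n) (tG_adj p M a b n) v) > x))
            \<longlonglongrightarrow> (\<Sum>k. if real k > x then p k else 0))
       \<and> (\<forall>\<epsilon>>0. (\<lambda>n. unif_prob (Vset p M n)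
              (\<lambda>v. \<bar>pagerank (Vset p M n) (tG_adj p M a b n) c v - 1\<bar> > \<epsilon>)) \<longlonglongrightarrow> 0)"
proof -
  interpret circulant_union p M a b
    using p_nonneg p_sums p_zero p_odd M_div M_slow by unfold_locales
  show ?thesis
    using degree_distribution_tendsto degree_tail_tendsto pagerank_deviation_tendsto[OF c] by blast
qed

end
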